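(* There exists a topologically mixing homeomorphism of a compact metric space that has the L-shadowing property and has no periodic points.
   Context: L-shadowing for a homeomorphism $f$ of a compact metric space $(X,d)$: for every $\varepsilon>0$ there is $\delta>0$ such that every sequence $(x_k)_{k\in\mathbb{Z}}$ with $d(f(x_k),x_{k+1})\le\delta$ for all $k$ and $d(f(x_k),x_{k+1})\to0$ as $|k|\to\infty$ admits $z\in X$ with $d(f^k(z),x_k)\le\varepsilon$ for all $k$ and $d(f^k(z),x_k)\to0$ as $|k|\to\infty$. $f$ is topologically mixing if for all nonempty open $U,V$ there is $n>0$ with $f^k(U)\cap V\ne\emptyset$ for all $k\ge n$. *)

theory Defs
  imports "HOL-Analysis.Analysis"
begin

definition int_iter :: "'a set \<Rightarrow> ('a \<Rightarrow> 'a) \<Rightarrow> int \<Rightarrow> 'a \<Rightarrow> 'a" where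
  "int_iter S f k = (if 0 \<le> k then f ^^ nat k else inv_into S f ^^ nat (- k))"

definition L_shadowing :: "'a metric \<Rightarrow> ('a \<Rightarrow> 'a) \<Rightarrow> bool" where
  "L_shadowing m f \<longleftrightarrow>
    (\<forall>\<epsilon>>0. \<exists>\<delta>>0. \<forall>x :: int \<Rightarrow> 'a.
       ((\<forall>k. x k \<in> mspace m) \<and>
        (\<forall>k. mdist m (f (x k)) (x (k + 1)) \<le> \<delta>) \<and>
        ((\<lambda>k. mdist m (f (x k)) (x (k + 1))) \<longlongrightarrow> 0) at_top \<and>
        ((\<lambda>k. mdist m (f (x k)) (x (k + 1))) \<longlongrightarrow> 0) at_bot)
       \<longrightarrow> (\<exists>z \<in> mspace m.
              (\<forall>k. mdist m (int_iter (mspace m) f k z) (x k) \<le> \<epsilon>) \<and>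
              ((\<lambda>k. mdist m (int_iter (mspace m) f k z) (x k)) \<longlongrightarrow> 0) at_top \<and>
              ((\<lambda>k. mdist m (int_iter (mspace m) f k z) (x k)) \<longlongrightarrow> 0) at_bot))"

definition topologically_mixing :: "'a metric \<Rightarrow> ('a \<Rightarrow> 'a) \<Rightarrow> bool" where
  "topologically_mixing m f \<longleftrightarrow>
    (\<forall>U V. openin (mtopology_of m) U \<and> U \<noteq> {} \<and> openin (mtopology_of m) V \<and> V \<noteq> {}
       \<longrightarrow> (\<exists>n>0. \<forall>k\<ge>n. (f ^^ k) ` U \<inter> V \<noteq> {}))"

definition has_periodic_point :: "'a metric \<Rightarrow> ('a \<Rightarrow> 'a) \<Rightarrow> bool" where
  "has_periodic_point m f \<longleftrightarrow> (\<exists>x \<in> mspace m. \<exists>n>0. (f ^^ n) x = x)"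

end

theory Submission
  imports Defs
begin

text \<open>The example is the product, over \<open>q \<ge> 1\<close>, of the shifts of finite type \<open>X\<^bsub>q\<^esub>\<close> of
  bi-infinite sequences in \<open>\<int>/q\<close> whose consecutive differences are \<open>1\<close> or \<open>2\<close>, with the
  simultaneous shift. Any two symbols of \<open>\<int>/q\<close> are joined by a path of every length
  \<open>\<ge> q\<close>; this makes each factor mixing, and it lets a pseudo-orbit be corrected on the
  finitely many coordinates that matter at a given precision, so that the diagonal sequence of an
  asymptotic pseudo-orbit, patched near time \<open>0\<close>, is an asymptotically shadowing point.
  There are no periodic points: \<open>n\<close> steps in \<open>X\<^bsub>2n+1\<^esub>\<close> advance by between \<open>n\<close> and
  \<open>2n\<close>, never by a multiple of \<open>2n + 1\<close>.

  A point \<open>x :: nat \<Rightarrow> nat\<close> encodes the family of sequences \<open>layer x M\<close>, where layer \<open>M\<close>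
  lives in \<open>X\<^bsub>M+1\<^esub>\<close>; two points are at distance \<open>(1/2)^N\<close> when \<open>N\<close> is the largest window
  \<open>M + |j| < N\<close> of coordinates on which they agree.\<close>

section \<open>Encoding a family of integer sequences as a point\<close>

definition layer :: "(nat \<Rightarrow> nat) \<Rightarrow> nat \<Rightarrow> int \<Rightarrow> nat" where
  "layer x M j = x (prod_encode (M, int_encode j))"

definition of_layers :: "(nat \<Rightarrow> int \<Rightarrow> nat) \<Rightarrow> nat \<Rightarrow> nat" where
  "of_layers F i = (case prod_decode i of (M, c) \<Rightarrow> F M (int_decode c))"

lemma layer_of_layers [simp]: "layer (of_layers F) M = F M"
  by (simp add: layer_def of_layers_def fun_eq_iff)

lemma of_layers_layer [simp]: "of_layers (layer x) = x"
proof
  fix i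
  obtain M c where "prod_decode i = (M, c)" by fastforce
  then show "of_layers (layer x) i = x i"
    by (simp add: of_layers_def layer_def) (metis prod_decode_inverse)
qed

lemma eq_iff_layers: "x = y \<longleftrightarrow> (\<forall>M. layer x M = layer y M)"
  by (metis of_layers_layer ext)

section \<open>Paths with steps 1 and 2 in a cyclic group\<close>

definition cyc_step :: "nat \<Rightarrow> nat \<Rightarrow> nat \<Rightarrow> bool" where
  "cyc_step q a b \<longleftrightarrow> a < q \<and> (b = (a + 1) mod q \<or> b = (a + 2) mod q)"

definition cyc_path :: "nat \<Rightarrow> (int \<Rightarrow> nat) \<Rightarrow> bool" where
  "cyc_path q \<alpha> \<longleftrightarrow> (\<forall>j. cyc_step q (\<alpha> j) (\<alpha> (j + 1)))"

lemma cyc_path_less: "cyc_path q \<alpha> \<Longrightarrow> \<alpha> j < q"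
  by (simp add: cyc_path_def cyc_step_def)

lemma cyc_path_advance:
  assumes "cyc_path q \<alpha>"
  shows "\<exists>s. l \<le> s \<and> s \<le> 2 * l \<and> \<alpha> (j + int l) = (\<alpha> j + s) mod q"
proof (induction l)
  case 0
  then show ?case using cyc_path_less[OF assms] by simp
next
  case (Suc l)
  then obtain s where s: "l \<le> s" "s \<le> 2 * l" "\<alpha> (j + int l) = (\<alpha> j + s) mod q" by blast
  have "cyc_step q (\<alpha> (j + int l)) (\<alpha> (j + int (Suc l)))"
    using assms unfolding cyc_path_def by (metis add.assoc of_nat_Suc add.commute)
  then obtain d where d: "d \<in> {1, 2}" "\<alpha> (j + int (Suc l)) = ((\<alpha> j + s) mod q + d) mod q"
    unfolding cyc_step_def s(3) by blast
  then have "\<alpha> (j + int (Suc l)) = (\<alpha> j + (s + d)) mod q"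
    by (simp add: mod_add_left_eq add.assoc)
  moreover have "Suc l \<le> s + d" "s + d \<le> 2 * Suc l" using s d(1) by auto
  ultimately show ?case by blast
qed

lemma cyc_path_not_periodic:
  assumes "cyc_path (Suc (2 * n)) \<alpha>" and "0 < n"
  shows "\<alpha> (j + int n) \<noteq> \<alpha> j"
proof
  assume per: "\<alpha> (j + int n) = \<alpha> j"
  obtain s where s: "n \<le> s" "s \<le> 2 * n" "\<alpha> (j + int n) = (\<alpha> j + s) mod Suc (2 * n)"
    using cyc_path_advance[OF assms(1)] by blast
  have "(\<alpha> j + s) mod Suc (2 * n) = \<alpha> j mod Suc (2 * n)"
    using s(3) per cyc_path_less[OF assms(1)] by simp
  then have "Suc (2 * n) dvd s" by (simp add: mod_eq_dvd_iff_nat)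
  then show False using s \<open>0 < n\<close> by (auto dest: dvd_imp_le)
qed

text \<open>Walking from \<open>a\<close> to \<open>b\<close> in \<open>g \<ge> q\<close> steps: take \<open>t < q\<close> double steps first,
  where \<open>g + t \<equiv> b - a (mod q)\<close>.\<close>
lemma cyc_walk_exists:
  assumes "0 < q" and "a < q" and "b < q" and "q \<le> g"
  shows "\<exists>w. w 0 = a \<and> w g = b \<and> (\<forall>i. cyc_step q (w i) (w (Suc i)))"
proof -
  define t where "t = nat ((int b - int a - int g) mod int q)"
  have "t < q" unfolding t_def using assms by (simp add: nat_less_iff)
  define w where "w i = (a + i + min i t) mod q" for i
  have "min g t = t" using \<open>t < q\<close> assms by simp
  then have "int (w g) = (int a + int g + int t) mod int q" by (simp add: w_def zmod_int)
  also have "int t = (int b - int a - int g) mod int q" unfolding t_def using assms by simp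
  also have "(int a + int g + (int b - int a - int g) mod int q) mod int q = int b"
    using assms by (simp add: mod_add_right_eq)
  finally have "w g = b" by simp
  moreover have "cyc_step q (w i) (w (Suc i))" for i
  proof -
    have "w (Suc i) = (w i + (if i < t then 2 else 1)) mod q"
      unfolding w_def by (simp add: mod_add_left_eq min_def)
    moreover have "w i < q" using assms by (simp add: w_def)
    ultimately show ?thesis unfolding cyc_step_def by (auto split: if_splits)
  qed
  moreover have "w 0 = a" using assms by (simp add: w_def)
  ultimately show ?thesis by blast
qed

lemma cyc_path_splice:
  fixes s t :: int
  assumes "0 < q" and "int q \<le> t - s"
    and "\<And>j. j < s \<Longrightarrow> cyc_step q (\<alpha> j) (\<alpha> (j + 1))" and "\<alpha> s < q"
    and "\<And>j. t \<le> j \<Longrightarrow> cyc_step q (\<beta> j) (\<beta> (j + 1))" and "\<beta> t < q"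
  shows "\<exists>\<gamma>. cyc_path q \<gamma> \<and> (\<forall>j\<le>s. \<gamma> j = \<alpha> j) \<and> (\<forall>j\<ge>t. \<gamma> j = \<beta> j)"
proof -
  have "q \<le> nat (t - s)" using assms(2) by linarith
  then obtain w where w0: "w 0 = \<alpha> s" and wt: "w (nat (t - s)) = \<beta> t"
    and w: "\<And>i. cyc_step q (w i) (w (Suc i))"
    using cyc_walk_exists assms(1,4,6) by blast
  define \<gamma> where "\<gamma> j = (if j \<le> s then \<alpha> j else if t \<le> j then \<beta> j else w (nat (j - s)))" for j
  have "s < t" using assms(1,2) by linarith
  have \<gamma>_mid: "\<gamma> j = w (nat (j - s))" if "s \<le> j" "j \<le> t" for j
    using that w0 wt unfolding \<gamma>_def by auto
  have "cyc_step q (\<gamma> j) (\<gamma> (j + 1))" for j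
  proof -
    consider "j < s" | "t \<le> j" | "s \<le> j" "j < t" by linarith
    then show ?thesis
    proof cases
      case 1
      then show ?thesis using assms(3) unfolding \<gamma>_def by simp
    next
      case 2
      then show ?thesis using assms(5) \<open>s < t\<close> unfolding \<gamma>_def by simp
    next
      case 3
      then have "nat (j + 1 - s) = Suc (nat (j - s))" by simp
      then show ?thesis using 3 w \<gamma>_mid[of j] \<gamma>_mid[of "j + 1"] by simp
    qed
  qed
  moreover have "\<forall>j\<le>s. \<gamma> j = \<alpha> j" "\<forall>j\<ge>t. \<gamma> j = \<beta> j"
    using \<open>s < t\<close> unfolding \<gamma>_def by auto
  ultimately show ?thesis unfolding cyc_path_def by blast
qed

lemma cyc_path_patch:
  assumes "0 < q" and "\<And>j. int S \<le> \<bar>j\<bar> \<Longrightarrow> cyc_step q (\<beta> j) (\<beta> (j + 1))"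
    and "\<And>j. \<beta> j < q"
  shows "\<exists>\<gamma>. cyc_path q \<gamma> \<and> (\<forall>j. int (S + q) \<le> \<bar>j\<bar> \<longrightarrow> \<gamma> j = \<beta> j)"
proof -
  have "\<exists>\<gamma>. cyc_path q \<gamma> \<and> (\<forall>j\<le>- int (S + q). \<gamma> j = \<beta> j) \<and> (\<forall>j\<ge>int (S + q). \<gamma> j = \<beta> j)"
  proof (rule cyc_path_splice)
    show "cyc_step q (\<beta> j) (\<beta> (j + 1))" if "j < - int (S + q)" for j
      using that by (intro assms(2)) linarith
    show "cyc_step q (\<beta> j) (\<beta> (j + 1))" if "int (S + q) \<le> j" for j
      using that by (intro assms(2)) linarith
  qed (use assms(1,3) in simp_all)
  then obtain \<gamma> where "cyc_path q \<gamma>" "\<forall>j\<le>- int (S + q). \<gamma> j = \<beta> j" "\<forall>j\<ge>int (S + q). \<gamma> j = \<beta> j"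
    by blast
  moreover have "j \<le> - int (S + q) \<or> int (S + q) \<le> j" if "int (S + q) \<le> \<bar>j\<bar>" for j
    using that by linarith
  ultimately show ?thesis by blast
qed

section \<open>The shift space and its metric\<close>

definition shift_space :: "(nat \<Rightarrow> nat) set" where
  "shift_space = {x. \<forall>M. cyc_path (Suc M) (layer x M)}"

definition shift :: "int \<Rightarrow> (nat \<Rightarrow> nat) \<Rightarrow> nat \<Rightarrow> nat" where
  "shift k x = of_layers (\<lambda>M j. layer x M (j + k))"

lemma layer_shift [simp]: "layer (shift k x) M j = layer x M (j + k)"
  by (simp add: shift_def)

lemma shift_shift: "shift a (shift b x) = shift (a + b) x"
  by (simp add: eq_iff_layers fun_eq_iff ac_simps)

lemma shift_0 [simp]: "shift 0 x = x"
  by (simp add: eq_iff_layers fun_eq_iff)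

lemma shift_in_shift_space: "x \<in> shift_space \<Longrightarrow> shift k x \<in> shift_space"
  unfolding shift_space_def cyc_path_def by (simp add: algebra_simps) (metis add.commute add.left_commute)

lemma funpow_shift_1: "(shift 1 ^^ n) x = shift (int n) x"
  by (induction n) (simp_all add: shift_shift add.commute)

lemma layer_less: "x \<in> shift_space \<Longrightarrow> layer x M j < Suc M"
  by (simp add: shift_space_def cyc_path_less)

lemma int_iter_shift_1:
  assumes "z \<in> shift_space"
  shows "int_iter shift_space (shift 1) k z = shift k z"
proof -
  have inj: "inj_on (shift 1) shift_space"
    by (rule inj_onI) (metis shift_shift shift_0 add.commute add.right_inverse)
  have inv: "inv_into shift_space (shift 1) y = shift (-1) y" if "y \<in> shift_space" for y
    by (rule inv_into_f_eq[OF inj]) (simp_all add: shift_shift that shift_in_shift_space)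
  have "(inv_into shift_space (shift 1) ^^ n) z = shift (- int n) z" for n
  proof (induction n)
    case (Suc n)
    then show ?case
      using inv shift_in_shift_space[OF assms] by (simp add: shift_shift)
  qed simp
  then show ?thesis unfolding int_iter_def funpow_shift_1 by simp
qed

lemma no_periodic_point:
  assumes "x \<in> shift_space" and "0 < n"
  shows "(shift 1 ^^ n) x \<noteq> x"
proof
  assume "(shift 1 ^^ n) x = x"
  then have "layer x (2 * n) (0 + int n) = layer x (2 * n) 0"
    by (metis funpow_shift_1 layer_shift)
  moreover have "cyc_path (Suc (2 * n)) (layer x (2 * n))"
    using assms(1) by (simp add: shift_space_def)
  ultimately show False using cyc_path_not_periodic assms(2) by blast
qed

lemma shift_space_nonempty: "shift_space \<noteq> {}"
proof -
  have "cyc_path (Suc M) (\<lambda>j. nat (j mod int (Suc M)))" for M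
  proof -
    have "nat ((j + 1) mod int (Suc M)) = (nat (j mod int (Suc M)) + 1) mod Suc M" for j
    proof -
      have "(j + 1) mod int (Suc M) = (j mod int (Suc M) + 1) mod int (Suc M)"
        by (simp add: mod_add_left_eq)
      then show ?thesis by (simp add: nat_mod_distrib nat_add_distrib)
    qed
    moreover have "nat (j mod int (Suc M)) < Suc M" for j
      by (simp add: nat_less_iff)
    ultimately show ?thesis unfolding cyc_path_def cyc_step_def by simp
  qed
  then have "of_layers (\<lambda>M j. nat (j mod int (Suc M))) \<in> shift_space"
    by (simp add: shift_space_def)
  then show ?thesis by blast
qed

definition agree :: "nat \<Rightarrow> (nat \<Rightarrow> nat) \<Rightarrow> (nat \<Rightarrow> nat) \<Rightarrow> bool" where
  "agree n x y \<longleftrightarrow> (\<forall>M j. M + nat \<bar>j\<bar> < n \<longrightarrow> layer x M j = layer y M j)"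

lemma agreeD: "agree n x y \<Longrightarrow> M + nat \<bar>j\<bar> < n \<Longrightarrow> layer x M j = layer y M j"
  unfolding agree_def by blast

lemma agree_0 [simp]: "agree 0 x y"
  unfolding agree_def by simp

lemma agree_mono: "agree n x y \<Longrightarrow> m \<le> n \<Longrightarrow> agree m x y"
  unfolding agree_def by auto

lemma agree_sym: "agree n x y \<longleftrightarrow> agree n y x"
  unfolding agree_def by auto

lemma agree_trans: "agree n x y \<Longrightarrow> agree n y z \<Longrightarrow> agree n x z"
  unfolding agree_def by auto

lemma agree_shift: "agree (n + nat \<bar>k\<bar>) x y \<Longrightarrow> agree n (shift k x) (shift k y)"
  unfolding agree_def by auto

lemma eq_if_agree: "(\<And>n. agree n x y) \<Longrightarrow> x = y"
  unfolding eq_iff_layers agree_def fun_eq_iff by (meson lessI)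

definition agree_dist :: "(nat \<Rightarrow> nat) \<Rightarrow> (nat \<Rightarrow> nat) \<Rightarrow> real" where
  "agree_dist x y = (if x = y then 0 else (1/2) ^ (LEAST n. \<not> agree (Suc n) x y))"

lemma agree_dist_le_iff: "agree_dist x y \<le> (1/2) ^ n \<longleftrightarrow> agree n x y"
proof (cases "x = y")
  case True
  then show ?thesis by (simp add: agree_dist_def agree_def)
next
  case False
  then obtain n0 where "\<not> agree (Suc n0) x y"
    using eq_if_agree agree_mono by (metis le_SucI order_refl)
  define L where "L = (LEAST n. \<not> agree (Suc n) x y)"
  have "\<not> agree (Suc L) x y"
    unfolding L_def by (rule LeastI) fact
  moreover have "agree (Suc k) x y" if "k < L" for k
    using not_less_Least[of k] that unfolding L_def by blast
  ultimately have "agree n x y \<longleftrightarrow> n \<le> L"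
    by (cases n) (auto intro: agree_mono)
  moreover have "agree_dist x y = (1/2) ^ L" using False by (simp add: agree_dist_def L_def)
  ultimately show ?thesis by (simp add: power_decreasing_iff)
qed

lemma agree_dist_cases: "agree_dist x y = 0 \<or> (\<exists>L. agree_dist x y = (1/2) ^ L)"
  by (auto simp: agree_dist_def)

lemma agree_dist_nonneg: "0 \<le> agree_dist x y"
  by (simp add: agree_dist_def)

lemma agree_dist_eq_0_iff: "agree_dist x y = 0 \<longleftrightarrow> x = y"
  by (simp add: agree_dist_def)

lemma agree_dist_ultra: "agree_dist x z \<le> max (agree_dist x y) (agree_dist y z)"
proof -
  consider "x = y" | "y = z" | A B where "agree_dist x y = (1/2) ^ A" "agree_dist y z = (1/2) ^ B"
    using agree_dist_cases agree_dist_eq_0_iff by metis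
  then show ?thesis
  proof cases
    case 3
    then have "agree (min A B) x z"
      by (metis agree_dist_le_iff agree_mono agree_trans min.cobounded1 min.cobounded2 order_refl)
    then have "agree_dist x z \<le> (1/2) ^ min A B"
      by (simp add: agree_dist_le_iff)
    also have "\<dots> = max (agree_dist x y) (agree_dist y z)"
      using 3 by (simp add: min_def max_def power_decreasing_iff)
    finally show ?thesis .
  qed (simp_all add: agree_dist_eq_0_iff)
qed

lemma Metric_space_shift_space: "Metric_space shift_space agree_dist"
proof
  fix x y z
  show "0 \<le> agree_dist x y" by (rule agree_dist_nonneg)
  show "agree_dist x y = agree_dist y x" by (simp add: agree_dist_def agree_sym eq_commute)
  show "agree_dist x y = 0 \<longleftrightarrow> x = y" by (rule agree_dist_eq_0_iff)
  show "agree_dist x z \<le> agree_dist x y + agree_dist y z"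
    using agree_dist_ultra[of x z y] agree_dist_nonneg[of x y] agree_dist_nonneg[of y z] by linarith
qed

section \<open>Topology: compactness and the shift homeomorphism\<close>

interpretation Sh: Metric_space shift_space agree_dist
  by (rule Metric_space_shift_space)

lemma ex_agree_imp_agree_dist_less:
  assumes "0 < e"
  shows "\<exists>n. \<forall>x y. agree n x y \<longrightarrow> agree_dist x y < e"
proof -
  obtain n where n: "(1/2) ^ n < e" using real_arch_pow_inv[of e "1/2"] assms by auto
  have "agree_dist x y < e" if "agree n x y" for x y
    using that n agree_dist_le_iff[of x y n] by linarith
  then show ?thesis by blast
qed

lemma openin_shift_space_agree:
  assumes "openin Sh.mtopology U" and "x \<in> U"
  shows "\<exists>n. \<forall>y\<in>shift_space. agree n x y \<longrightarrow> y \<in> U"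
proof -
  have "x \<in> shift_space" and "\<exists>r>0. Sh.mball x r \<subseteq> U"
    using assms unfolding Sh.openin_mtopology by auto
  then obtain r where "r > 0" and ball: "Sh.mball x r \<subseteq> U" by blast
  then obtain n where n: "\<And>y. agree n x y \<Longrightarrow> agree_dist x y < r"
    using ex_agree_imp_agree_dist_less by blast
  have "y \<in> U" if "y \<in> shift_space" and "agree n x y" for y
  proof -
    have "y \<in> Sh.mball x r" using that n \<open>x \<in> shift_space\<close> by simp
    then show "y \<in> U" using ball by blast
  qed
  then show ?thesis by blast
qed

lemma continuous_map_shift: "continuous_map Sh.mtopology Sh.mtopology (shift k)"
  unfolding Sh.metric_continuous_map[OF Metric_space_shift_space]
proof (intro conjI ballI allI impI)
  show "shift k ` shift_space \<subseteq> shift_space" using shift_in_shift_space by blast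
next
  fix x and e :: real
  assume "0 < e"
  then obtain n where n: "\<And>x y. agree n x y \<Longrightarrow> agree_dist x y < e"
    using ex_agree_imp_agree_dist_less by blast
  show "\<exists>d>0. \<forall>y. y \<in> shift_space \<and> agree_dist x y < d \<longrightarrow> agree_dist (shift k x) (shift k y) < e"
  proof (intro exI[of _ "(1/2) ^ (n + nat \<bar>k\<bar>)"] conjI allI impI)
    fix y assume "y \<in> shift_space \<and> agree_dist x y < (1/2) ^ (n + nat \<bar>k\<bar>)"
    then have "agree (n + nat \<bar>k\<bar>) x y" by (simp add: agree_dist_le_iff[symmetric])
    then show "agree_dist (shift k x) (shift k y) < e" by (intro n agree_shift)
  qed simp
qed

lemma homeomorphic_map_shift_1: "homeomorphic_map Sh.mtopology Sh.mtopology (shift 1)"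
  unfolding homeomorphic_map_maps
proof
  show "homeomorphic_maps Sh.mtopology Sh.mtopology (shift 1) (shift (- 1))"
    unfolding homeomorphic_maps_def
    using continuous_map_shift[of 1] continuous_map_shift[of "-1"] by (auto simp: shift_shift)
qed

text \<open>Points agreeing on the window of size \<open>n\<close> are \<open>(1/2)^n\<close>-close, and there are only
  finitely many window patterns since layer \<open>M\<close> takes values below \<open>M + 1\<close>.\<close>
lemma mtotally_bounded_shift_space: "Sh.mtotally_bounded shift_space"
  unfolding Sh.mtotally_bounded_def
proof (intro allI impI)
  fix e :: real
  assume "0 < e"
  then obtain n where n: "\<And>x y. agree n x y \<Longrightarrow> agree_dist x y < e"
    using ex_agree_imp_agree_dist_less by blast
  define W where "W = {(M, j). M + nat \<bar>j\<bar> < n}"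
  define R where "R x = restrict (\<lambda>(M, j). layer x M j) W" for x
  have "W \<subseteq> {..<n} \<times> {- int n..int n}" unfolding W_def by auto
  then have "finite W" by (rule finite_subset) auto
  have "R x \<in> (\<Pi>\<^sub>E p\<in>W. {..<n})" if "x \<in> shift_space" for x
  proof -
    have "layer x M j < n" if "(M, j) \<in> W" for M j
      using layer_less[OF \<open>x \<in> shift_space\<close>, of M j] that unfolding W_def by simp
    then show ?thesis by (auto simp: R_def)
  qed
  then have "R ` shift_space \<subseteq> (\<Pi>\<^sub>E p\<in>W. {..<n})" by blast
  then have "finite (R ` shift_space)"
    by (rule finite_subset) (simp add: finite_PiE \<open>finite W\<close>)
  define K where "K = inv_into shift_space R ` R ` shift_space"
  have "x \<in> (\<Union>k\<in>K. Sh.mball k e)" if "x \<in> shift_space" for x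
  proof -
    define k where "k = inv_into shift_space R (R x)"
    have "R x \<in> R ` shift_space" using that by (rule imageI)
    then have "k \<in> shift_space" "R k = R x"
      unfolding k_def by (rule inv_into_into, rule f_inv_into_f)
    have "agree n k x"
    proof (unfold agree_def, intro allI impI)
      fix M j assume "M + nat \<bar>j\<bar> < n"
      then show "layer k M j = layer x M j"
        using fun_cong[OF \<open>R k = R x\<close>, of "(M, j)"] by (simp add: R_def W_def)
    qed
    then have "x \<in> Sh.mball k e" using n \<open>k \<in> shift_space\<close> that by simp
    moreover have "k \<in> K" unfolding K_def k_def using that by (intro imageI)
    ultimately show ?thesis by blast
  qed
  then have "shift_space \<subseteq> (\<Union>k\<in>K. Sh.mball k e)" by blast
  moreover have "K \<subseteq> shift_space" unfolding K_def by (auto intro!: inv_into_into)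
  moreover have "finite K" unfolding K_def using \<open>finite (R ` shift_space)\<close> by (rule finite_imageI)
  ultimately show "\<exists>K. finite K \<and> K \<subseteq> shift_space \<and> shift_space \<subseteq> (\<Union>x\<in>K. Sh.mball x e)"
    by blast
qed

lemma MCauchy_agree:
  assumes "Sh.MCauchy \<sigma>"
  shows "\<exists>N. \<forall>a b. N \<le> a \<longrightarrow> N \<le> b \<longrightarrow> agree r (\<sigma> a) (\<sigma> b)"
proof -
  have "(0::real) < (1/2) ^ r" by simp
  then obtain N where "\<forall>a b. N \<le> a \<longrightarrow> N \<le> b \<longrightarrow> agree_dist (\<sigma> a) (\<sigma> b) < (1/2) ^ r"
    using assms unfolding Sh.MCauchy_def by blast
  then show ?thesis unfolding agree_dist_le_iff[symmetric] by (meson less_imp_le)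
qed

text \<open>The limit of a Cauchy sequence takes its coordinate \<open>(M, j)\<close> from a term beyond
  which the sequence is constant on the window of size \<open>M + |j| + 1\<close>.\<close>
lemma mcomplete_shift_space: "Sh.mcomplete"
  unfolding Sh.mcomplete_def
proof (intro allI impI)
  fix \<sigma> assume "Sh.MCauchy \<sigma>"
  then have \<sigma>: "\<sigma> a \<in> shift_space" for a by (simp add: Sh.MCauchy_def range_subsetD)
  obtain N where N: "\<And>r a b. N r \<le> a \<Longrightarrow> N r \<le> b \<Longrightarrow> agree r (\<sigma> a) (\<sigma> b)"
    using MCauchy_agree[OF \<open>Sh.MCauchy \<sigma>\<close>] by metis
  define w where "w M j = Suc (M + nat \<bar>j\<bar>)" for M j
  define y where "y = of_layers (\<lambda>M j. layer (\<sigma> (N (w M j))) M j)"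
  have layer_y: "layer y M j = layer (\<sigma> a) M j" if "N (w M j) \<le> a" for M j a
    using N[OF order_refl that] unfolding y_def agree_def w_def by simp
  have "y \<in> shift_space"
    unfolding shift_space_def cyc_path_def
  proof (intro CollectI allI)
    fix M j
    define a where "a = max (N (w M j)) (N (w M (j + 1)))"
    have "layer y M j = layer (\<sigma> a) M j" "layer y M (j + 1) = layer (\<sigma> a) M (j + 1)"
      by (simp_all add: layer_y a_def)
    then show "cyc_step (Suc M) (layer y M j) (layer y M (j + 1))"
      using \<sigma>[of a] by (simp add: shift_space_def cyc_path_def)
  qed
  moreover have "\<exists>K. \<forall>a\<ge>K. \<sigma> a \<in> shift_space \<and> agree_dist (\<sigma> a) y < e" if "0 < e" for e
  proof -
    obtain n where n: "\<And>x y. agree n x y \<Longrightarrow> agree_dist x y < e"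
      using ex_agree_imp_agree_dist_less[OF \<open>0 < e\<close>] by blast
    have "agree n (\<sigma> a) y" if "(\<Sum>r\<le>n. N r) \<le> a" for a
    proof (unfold agree_def, intro allI impI)
      fix M j assume "M + nat \<bar>j\<bar> < n"
      then have "N (w M j) \<le> (\<Sum>r\<le>n. N r)"
        unfolding w_def by (intro member_le_sum) auto
      then show "layer (\<sigma> a) M j = layer y M j"
        using layer_y[of M j a] \<open>(\<Sum>r\<le>n. N r) \<le> a\<close> by linarith
    qed
    then show ?thesis using \<sigma> n by blast
  qed
  ultimately have "limitin Sh.mtopology \<sigma> y sequentially"
    unfolding Sh.limit_metric_sequentially by blast
  then show "\<exists>y. limitin Sh.mtopology \<sigma> y sequentially" by blast
qed

lemma compact_space_shift_space: "compact_space Sh.mtopology"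
  unfolding Sh.compact_space_eq_mcomplete_mtotally_bounded
  using mcomplete_shift_space mtotally_bounded_shift_space by blast

section \<open>Topological mixing\<close>

text \<open>Below the window size \<open>n\<close>, layer \<open>M\<close> of \<open>u\<close> follows \<open>x\<close> up to time \<open>n\<close> and the
  translate of \<open>y\<close> from time \<open>k - n\<close> on, connected by a walk of length at least \<open>n > M\<close>.\<close>
lemma shift_space_connect:
  assumes x: "x \<in> shift_space" and y: "y \<in> shift_space" and "3 * n \<le> k"
  shows "\<exists>u\<in>shift_space. agree n x u \<and> agree n y (shift (int k) u)"
proof -
  have "\<exists>\<gamma>. cyc_path (Suc M) \<gamma> \<and> (\<forall>j\<le>int n. \<gamma> j = layer x M j)
      \<and> (\<forall>j\<ge>int k - int n. \<gamma> j = layer y M (j - int k))" if "M < n" for M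
  proof (rule cyc_path_splice)
    show "int (Suc M) \<le> int k - int n - int n" using \<open>3 * n \<le> k\<close> that by linarith
    show "cyc_step (Suc M) (layer x M j) (layer x M (j + 1))" for j
      using x by (simp add: shift_space_def cyc_path_def)
    show "cyc_step (Suc M) (layer y M (j - int k)) (layer y M (j + 1 - int k))" for j
    proof -
      have "cyc_step (Suc M) (layer y M (j - int k)) (layer y M (j - int k + 1))"
        using y by (simp add: shift_space_def cyc_path_def)
      then show ?thesis by (simp only: diff_add_eq)
    qed
  qed (simp_all add: layer_less x y)
  then obtain G where G: "\<And>M. M < n \<Longrightarrow> cyc_path (Suc M) (G M) \<and> (\<forall>j\<le>int n. G M j = layer x M j)
      \<and> (\<forall>j\<ge>int k - int n. G M j = layer y M (j - int k))"
    by metis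
  define u where "u = of_layers (\<lambda>M. if M < n then G M else layer x M)"
  have "u \<in> shift_space"
    using G x by (simp add: shift_space_def u_def)
  moreover have "agree n x u"
    unfolding agree_def u_def using G by simp
  moreover have "agree n y (shift (int k) u)"
    unfolding agree_def u_def using G by simp
  ultimately show ?thesis by blast
qed

lemma topologically_mixing_shift_1: "topologically_mixing (metric (shift_space, agree_dist)) (shift 1)"
  unfolding topologically_mixing_def Sh.mtopology_of
proof (intro allI impI)
  fix U V
  assume "openin Sh.mtopology U \<and> U \<noteq> {} \<and> openin Sh.mtopology V \<and> V \<noteq> {}"
  then obtain x y where U: "openin Sh.mtopology U" "x \<in> U" and V: "openin Sh.mtopology V" "y \<in> V"
    by blast
  obtain n1 where n1: "\<And>z. z \<in> shift_space \<Longrightarrow> agree n1 x z \<Longrightarrow> z \<in> U"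
    using openin_shift_space_agree[OF U] by blast
  obtain n2 where n2: "\<And>z. z \<in> shift_space \<Longrightarrow> agree n2 y z \<Longrightarrow> z \<in> V"
    using openin_shift_space_agree[OF V] by blast
  define n where "n = n1 + n2"
  have "x \<in> shift_space" "y \<in> shift_space"
    using U V unfolding Sh.openin_mtopology by blast+
  show "\<exists>N>0. \<forall>k\<ge>N. (shift 1 ^^ k) ` U \<inter> V \<noteq> {}"
  proof (intro exI[of _ "3 * n + 1"] conjI allI impI)
    fix k assume "3 * n + 1 \<le> k"
    then obtain u where u: "u \<in> shift_space" "agree n x u" "agree n y (shift (int k) u)"
      using shift_space_connect[OF \<open>x \<in> shift_space\<close> \<open>y \<in> shift_space\<close>, of n k] by auto
    have "u \<in> U"
      using u n1 agree_mono[of n x u n1] by (simp add: n_def)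
    moreover have "shift (int k) u \<in> V"
      using u n2 agree_mono[of n y _ n2] shift_in_shift_space by (simp add: n_def)
    ultimately show "(shift 1 ^^ k) ` U \<inter> V \<noteq> {}"
      unfolding funpow_shift_1 by blast
  qed simp
qed

section \<open>L-shadowing\<close>

lemma tendsto_agree_dist_iff:
  "((\<lambda>k. agree_dist (u k) (v k)) \<longlongrightarrow> 0) F \<longleftrightarrow> (\<forall>r. eventually (\<lambda>k. agree r (u k) (v k)) F)"
proof
  assume lim: "((\<lambda>k. agree_dist (u k) (v k)) \<longlongrightarrow> 0) F"
  show "\<forall>r. eventually (\<lambda>k. agree r (u k) (v k)) F"
  proof
    fix r
    have "eventually (\<lambda>k. dist (agree_dist (u k) (v k)) 0 < (1/2) ^ r) F"
      using lim unfolding tendsto_iff by simp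
    then show "eventually (\<lambda>k. agree r (u k) (v k)) F"
      by eventually_elim (simp add: agree_dist_le_iff[symmetric])
  qed
next
  assume agree: "\<forall>r. eventually (\<lambda>k. agree r (u k) (v k)) F"
  show "((\<lambda>k. agree_dist (u k) (v k)) \<longlongrightarrow> 0) F"
    unfolding tendsto_iff
  proof (intro allI impI)
    fix e :: real assume "0 < e"
    then obtain n where n: "\<And>x y. agree n x y \<Longrightarrow> agree_dist x y < e"
      using ex_agree_imp_agree_dist_less by blast
    show "eventually (\<lambda>k. dist (agree_dist (u k) (v k)) 0 < e) F"
      using agree[rule_format, of n] by eventually_elim (simp add: n agree_dist_nonneg)
  qed
qed

lemma eventually_at_top_and_at_bot_int:
  "eventually P at_top \<and> eventually P at_bot \<longleftrightarrow> (\<exists>T::nat. \<forall>k::int. int T \<le> \<bar>k\<bar> \<longrightarrow> P k)"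
proof
  assume "eventually P at_top \<and> eventually P at_bot"
  then obtain K1 K2 where K1: "\<And>k. K1 \<le> k \<Longrightarrow> P k" and K2: "\<And>k. k \<le> K2 \<Longrightarrow> P k"
    unfolding eventually_at_top_linorder eventually_at_bot_linorder by blast
  have "P k" if "int (nat (\<bar>K1\<bar> + \<bar>K2\<bar>)) \<le> \<bar>k\<bar>" for k
  proof (cases "0 \<le> k")
    case True
    then show ?thesis using that by (intro K1) linarith
  next
    case False
    then show ?thesis using that by (intro K2) linarith
  qed
  then show "\<exists>T::nat. \<forall>k. int T \<le> \<bar>k\<bar> \<longrightarrow> P k" by blast
next
  assume "\<exists>T::nat. \<forall>k. int T \<le> \<bar>k\<bar> \<longrightarrow> P k"
  then obtain T :: nat where T: "\<And>k. int T \<le> \<bar>k\<bar> \<Longrightarrow> P k" by blast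
  have "\<forall>k\<ge>int T. P k" "\<forall>k\<le>- int T. P k"
    by (auto intro: T)
  then show "eventually P at_top \<and> eventually P at_bot"
    unfolding eventually_at_top_linorder eventually_at_bot_linorder by blast
qed

lemma layer_pseudo_orbit_forward:
  fixes xs :: "int \<Rightarrow> nat \<Rightarrow> nat"
  assumes "\<And>i. a \<le> i \<Longrightarrow> i < a + int l \<Longrightarrow> agree R (shift 1 (xs i)) (xs (i + 1))"
    and "M + nat \<bar>j\<bar> < R" and "M + nat \<bar>j + int l\<bar> < R"
  shows "layer (xs (a + int l)) M j = layer (xs a) M (j + int l)"
  using assms
proof (induction l arbitrary: j)
  case (Suc l)
  have "agree R (shift 1 (xs (a + int l))) (xs (a + int l + 1))"
    using Suc.prems(1) by simp
  then have "layer (xs (a + int l)) M (j + 1) = layer (xs (a + int l + 1)) M j"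
    using agreeD Suc.prems(2) by fastforce
  moreover have "a + int (Suc l) = a + int l + 1" by simp
  ultimately have "layer (xs (a + int (Suc l))) M j = layer (xs (a + int l)) M (j + 1)"
    by (simp only:)
  also have "\<dots> = layer (xs a) M (j + 1 + int l)"
    using Suc.prems by (intro Suc.IH) auto
  finally show ?case by (simp add: ac_simps)
qed simp

lemma layer_pseudo_orbit:
  fixes xs :: "int \<Rightarrow> nat \<Rightarrow> nat"
  assumes "\<And>i. min k (k + j) \<le> i \<Longrightarrow> i < max k (k + j) \<Longrightarrow> agree R (shift 1 (xs i)) (xs (i + 1))"
    and "M + nat \<bar>j\<bar> < R"
  shows "layer (xs (k + j)) M 0 = layer (xs k) M j"
proof (cases "0 \<le> j")
  case True
  have "layer (xs (k + int (nat j))) M 0 = layer (xs k) M (0 + int (nat j))"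
    using assms True by (intro layer_pseudo_orbit_forward) auto
  then show ?thesis using True by simp
next
  case False
  have "layer (xs (k + j + int (nat (- j)))) M j = layer (xs (k + j)) M (j + int (nat (- j)))"
    using assms False by (intro layer_pseudo_orbit_forward) auto
  then show ?thesis using False by simp
qed

lemma cyc_step_layer_pseudo_orbit:
  assumes "x \<in> shift_space" and "agree (Suc M) (shift 1 x) x'"
  shows "cyc_step (Suc M) (layer x M 0) (layer x' M 0)"
proof -
  have "layer x' M 0 = layer x M (0 + 1)"
    using agreeD[OF assms(2), of M 0] by simp
  moreover have "cyc_step (Suc M) (layer x M 0) (layer x M (0 + 1))"
    using assms(1) unfolding shift_space_def cyc_path_def by blast
  ultimately show ?thesis by simp
qed

text \<open>Layer \<open>M\<close> of the shadowing point is the sequence \<open>k \<mapsto> layer (xs k) M 0\<close> wherever the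
  jumps of the pseudo-orbit are invisible at level \<open>M\<close>, patched into a path in the bounded
  time window where they may not be.\<close>
lemma pseudo_orbit_diagonal_point:
  fixes xs :: "int \<Rightarrow> nat \<Rightarrow> nat"
  assumes xs: "\<And>k. xs k \<in> shift_space"
    and near: "\<And>k. agree n (shift 1 (xs k)) (xs (k + 1))"
    and far: "\<And>M k. int (T M) \<le> \<bar>k\<bar> \<Longrightarrow> agree (Suc M) (shift 1 (xs k)) (xs (k + 1))"
  shows "\<exists>z\<in>shift_space. (\<forall>M<n. \<forall>k. layer z M k = layer (xs k) M 0)
           \<and> (\<forall>M k. int (T M + Suc M) \<le> \<bar>k\<bar> \<longrightarrow> layer z M k = layer (xs k) M 0)"
proof -
  define \<beta> where "\<beta> M k = layer (xs k) M 0" for M k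
  have "\<exists>\<gamma>. cyc_path (Suc M) \<gamma> \<and> (M < n \<longrightarrow> \<gamma> = \<beta> M)
      \<and> (\<forall>k. int (T M + Suc M) \<le> \<bar>k\<bar> \<longrightarrow> \<gamma> k = \<beta> M k)" for M
  proof (cases "M < n")
    case True
    then have "cyc_path (Suc M) (\<beta> M)"
      unfolding cyc_path_def \<beta>_def
      using xs near agree_mono by (blast intro: cyc_step_layer_pseudo_orbit Suc_leI)
    then show ?thesis by blast
  next
    case False
    have "\<exists>\<gamma>. cyc_path (Suc M) \<gamma> \<and> (\<forall>k. int (T M + Suc M) \<le> \<bar>k\<bar> \<longrightarrow> \<gamma> k = \<beta> M k)"
      unfolding \<beta>_def
      using xs far by (intro cyc_path_patch) (simp_all add: cyc_step_layer_pseudo_orbit layer_less)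
    then show ?thesis using False by blast
  qed
  then obtain G where G: "\<And>M. cyc_path (Suc M) (G M) \<and> (M < n \<longrightarrow> G M = \<beta> M)
      \<and> (\<forall>k. int (T M + Suc M) \<le> \<bar>k\<bar> \<longrightarrow> G M k = \<beta> M k)"
    by metis
  have "of_layers G \<in> shift_space"
    using G by (simp add: shift_space_def)
  then show ?thesis
    using G unfolding \<beta>_def by (intro bexI[of _ "of_layers G"]) simp_all
qed

lemma shift_shadowing_agree:
  fixes xs :: "int \<Rightarrow> nat \<Rightarrow> nat"
  assumes xs: "\<And>k. xs k \<in> shift_space"
    and near: "\<And>k. agree n (shift 1 (xs k)) (xs (k + 1))"
    and asymp: "\<And>r. \<exists>T. \<forall>k. int T \<le> \<bar>k\<bar> \<longrightarrow> agree r (shift 1 (xs k)) (xs (k + 1))"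
  shows "\<exists>z\<in>shift_space. (\<forall>k. agree n (shift k z) (xs k))
           \<and> (\<forall>r. \<exists>T. \<forall>k. int T \<le> \<bar>k\<bar> \<longrightarrow> agree r (shift k z) (xs k))"
proof -
  obtain T where T: "\<And>r k. int (T r) \<le> \<bar>k\<bar> \<Longrightarrow> agree r (shift 1 (xs k)) (xs (k + 1))"
    using asymp by metis
  define S where "S M = T (Suc M) + Suc M" for M
  obtain z where "z \<in> shift_space"
    and z_near: "\<And>M k. M < n \<Longrightarrow> layer z M k = layer (xs k) M 0"
    and z_far: "\<And>M k. int (S M) \<le> \<bar>k\<bar> \<Longrightarrow> layer z M k = layer (xs k) M 0"
    using pseudo_orbit_diagonal_point[where xs = xs and n = n and T = "\<lambda>M. T (Suc M)", OF xs near T]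
    unfolding S_def by blast
  have "agree n (shift k z) (xs k)" for k
  proof (unfold agree_def, intro allI impI)
    fix M j assume "M + nat \<bar>j\<bar> < n"
    then have "layer (xs (k + j)) M 0 = layer (xs k) M j"
      using near by (intro layer_pseudo_orbit)
    then show "layer (shift k z) M j = layer (xs k) M j"
      using z_near \<open>M + nat \<bar>j\<bar> < n\<close> by (simp add: add.commute)
  qed
  moreover have "\<exists>T. \<forall>k. int T \<le> \<bar>k\<bar> \<longrightarrow> agree r (shift k z) (xs k)" for r
  proof (intro exI allI impI)
    fix k :: int
    assume k: "int ((\<Sum>M<r. S M) + T r + r) \<le> \<bar>k\<bar>"
    show "agree r (shift k z) (xs k)"
    proof (unfold agree_def, intro allI impI)
      fix M j assume "M + nat \<bar>j\<bar> < r"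
      then have "S M \<le> (\<Sum>M<r. S M)" by (intro member_le_sum) auto
      then have "int (S M) \<le> \<bar>k + j\<bar>" using k \<open>M + nat \<bar>j\<bar> < r\<close> by linarith
      moreover have "layer (xs (k + j)) M 0 = layer (xs k) M j"
        using k \<open>M + nat \<bar>j\<bar> < r\<close> by (intro layer_pseudo_orbit[where R = r] T) linarith+
      ultimately show "layer (shift k z) M j = layer (xs k) M j"
        using z_far by (simp add: add.commute)
    qed
  qed
  ultimately show ?thesis using \<open>z \<in> shift_space\<close> by blast
qed

lemma L_shadowing_shift_1: "L_shadowing (metric (shift_space, agree_dist)) (shift 1)"
  unfolding L_shadowing_def Sh.mspace_metric Sh.mdist_metric
proof (intro allI impI)
  fix e :: real assume "0 < e"
  then obtain n where n: "\<And>x y. agree n x y \<Longrightarrow> agree_dist x y < e"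
    using ex_agree_imp_agree_dist_less by blast
  let ?jump = "\<lambda>xs k. agree_dist (shift 1 (xs k)) (xs (k + 1))"
  let ?err = "\<lambda>xs z k. agree_dist (int_iter shift_space (shift 1) k z) (xs k)"
  show "\<exists>\<delta>>0. \<forall>xs. (\<forall>k. xs k \<in> shift_space) \<and> (\<forall>k. ?jump xs k \<le> \<delta>) \<and>
      (?jump xs \<longlongrightarrow> 0) at_top \<and> (?jump xs \<longlongrightarrow> 0) at_bot \<longrightarrow>
      (\<exists>z\<in>shift_space. (\<forall>k. ?err xs z k \<le> e) \<and>
        (?err xs z \<longlongrightarrow> 0) at_top \<and> (?err xs z \<longlongrightarrow> 0) at_bot)"
  proof (intro exI[of _ "(1/2) ^ n"] conjI allI impI)
    fix xs :: "int \<Rightarrow> nat \<Rightarrow> nat"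
    assume H: "(\<forall>k. xs k \<in> shift_space) \<and> (\<forall>k. ?jump xs k \<le> (1/2) ^ n)
      \<and> (?jump xs \<longlongrightarrow> 0) at_top \<and> (?jump xs \<longlongrightarrow> 0) at_bot"
    then have xs: "\<And>k. xs k \<in> shift_space"
      and near: "\<And>k. agree n (shift 1 (xs k)) (xs (k + 1))"
      by (simp_all add: agree_dist_le_iff)
    have "\<exists>T. \<forall>k. int T \<le> \<bar>k\<bar> \<longrightarrow> agree r (shift 1 (xs k)) (xs (k + 1))" for r
      using H unfolding tendsto_agree_dist_iff eventually_at_top_and_at_bot_int[symmetric] by blast
    then obtain z where "z \<in> shift_space" and z_near: "\<forall>k. agree n (shift k z) (xs k)"
      and z_asymp: "\<forall>r. \<exists>T. \<forall>k. int T \<le> \<bar>k\<bar> \<longrightarrow> agree r (shift k z) (xs k)"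
      using shift_shadowing_agree[where xs = xs and n = n, OF xs near] by blast
    have err: "?err xs z k = agree_dist (shift k z) (xs k)" for k
      by (simp add: int_iter_shift_1[OF \<open>z \<in> shift_space\<close>])
    have "\<forall>r. eventually (\<lambda>k. agree r (shift k z) (xs k)) at_top \<and>
        eventually (\<lambda>k. agree r (shift k z) (xs k)) at_bot"
      using z_asymp unfolding eventually_at_top_and_at_bot_int .
    then have "(?err xs z \<longlongrightarrow> 0) at_top" "(?err xs z \<longlongrightarrow> 0) at_bot"
      unfolding err tendsto_agree_dist_iff by blast+
    moreover have "?err xs z k \<le> e" for k
      using n[OF z_near[rule_format]] err by (simp add: less_imp_le)
    ultimately show "\<exists>z\<in>shift_space. (\<forall>k. ?err xs z k \<le> e) \<and>
        (?err xs z \<longlongrightarrow> 0) at_top \<and> (?err xs z \<longlongrightarrow> 0) at_bot"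
      using \<open>z \<in> shift_space\<close> by blast
  qed simp
qed

theorem theoremC:
  shows "\<exists>(m :: (nat \<Rightarrow> nat) metric) f.
           mspace m \<noteq> {} \<and>
           compact_space (mtopology_of m) \<and>
           homeomorphic_map (mtopology_of m) (mtopology_of m) f \<and>
           topologically_mixing m f \<and>
           L_shadowing m f \<and>
           \<not> has_periodic_point m f"
proof (intro exI[of _ "metric (shift_space, agree_dist)"] exI[of _ "shift 1"] conjI)
  show "mspace (metric (shift_space, agree_dist)) \<noteq> {}"
    using shift_space_nonempty by simp
  show "compact_space (mtopology_of (metric (shift_space, agree_dist)))"
    using compact_space_shift_space by simp
  show "homeomorphic_map (mtopology_of (metric (shift_space, agree_dist)))
      (mtopology_of (metric (shift_space, agree_dist))) (shift 1)"
    using homeomorphic_map_shift_1 by simp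
  show "topologically_mixing (metric (shift_space, agree_dist)) (shift 1)"
    by (rule topologically_mixing_shift_1)
  show "L_shadowing (metric (shift_space, agree_dist)) (shift 1)"
    by (rule L_shadowing_shift_1)
  show "\<not> has_periodic_point (metric (shift_space, agree_dist)) (shift 1)"
    unfolding has_periodic_point_def using no_periodic_point by auto
qed

end
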